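(* Every maximal abelian subgroup of a Frattini-injective pro-$p$ group is isolated.
   Context: $p$ is a prime; subgroups are closed. A pro-$p$ group $G$ is Frattini-injective if distinct finitely generated subgroups of $G$ have distinct Frattini subgroups. A subgroup $H$ of $G$ is isolated if for every $x\in G$, $x^p\in H$ implies $x\in H$. *)

theory Defs
  imports "HOL-Analysis.Analysis" "HOL-Algebra.Algebra"
begin

definition topological_group :: "('a, 'b) monoid_scheme \<Rightarrow> 'a topology \<Rightarrow> bool" where
  "topological_group G T \<longleftrightarrow> group G \<and> topspace T = carrier G \<and>
     continuous_map (prod_topology T T) T (\<lambda>(x, y). x \<otimes>\<^bsub>G\<^esub> y) \<and>
     continuous_map T T (\<lambda>x. inv\<^bsub>G\<^esub> x)"

definition pro_p_group :: "nat \<Rightarrow> ('a, 'b) monoid_scheme \<Rightarrow> 'a topology \<Rightarrow> bool" where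
  "pro_p_group p G T \<longleftrightarrow> Factorial_Ring.prime p \<and> topological_group G T \<and> compact_space T \<and> Hausdorff_space T \<and>
     (\<forall>U. openin T U \<and> \<one>\<^bsub>G\<^esub> \<in> U \<longrightarrow>
        (\<exists>N. N \<lhd> G \<and> openin T N \<and> N \<subseteq> U \<and> finite (rcosets\<^bsub>G\<^esub> N) \<and>
             (\<exists>k. card (rcosets\<^bsub>G\<^esub> N) = p ^ k)))"

definition closed_subgroup :: "('a, 'b) monoid_scheme \<Rightarrow> 'a topology \<Rightarrow> 'a set \<Rightarrow> bool" where
  "closed_subgroup G T H \<longleftrightarrow> subgroup H G \<and> closedin T H"

definition closed_generate :: "('a, 'b) monoid_scheme \<Rightarrow> 'a topology \<Rightarrow> 'a set \<Rightarrow> 'a set" where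
  "closed_generate G T S = carrier G \<inter> \<Inter>{H. closed_subgroup G T H \<and> S \<subseteq> H}"

definition fg_closed_subgroup :: "('a, 'b) monoid_scheme \<Rightarrow> 'a topology \<Rightarrow> 'a set \<Rightarrow> bool" where
  "fg_closed_subgroup G T H \<longleftrightarrow> closed_subgroup G T H \<and>
     (\<exists>S. finite S \<and> S \<subseteq> H \<and> H = closed_generate G T S)"

definition open_subgroup_of :: "('a, 'b) monoid_scheme \<Rightarrow> 'a topology \<Rightarrow> 'a set \<Rightarrow> 'a set \<Rightarrow> bool" where
  "open_subgroup_of G T H M \<longleftrightarrow> subgroup M G \<and> M \<subseteq> H \<and> openin (subtopology T H) M"

definition maximal_open_subgroup_of :: "('a, 'b) monoid_scheme \<Rightarrow> 'a topology \<Rightarrow> 'a set \<Rightarrow> 'a set \<Rightarrow> bool" where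
  "maximal_open_subgroup_of G T H M \<longleftrightarrow> open_subgroup_of G T H M \<and> M \<noteq> H \<and>
     (\<forall>M'. open_subgroup_of G T H M' \<and> M \<subseteq> M' \<longrightarrow> M' = M \<or> M' = H)"

text \<open>Frattini subgroup of H: intersection of the maximal open subgroups of H
 (equal to H if there are none).\<close>
definition frattini :: "('a, 'b) monoid_scheme \<Rightarrow> 'a topology \<Rightarrow> 'a set \<Rightarrow> 'a set" where
  "frattini G T H = H \<inter> \<Inter>{M. maximal_open_subgroup_of G T H M}"

definition frattini_injective :: "('a, 'b) monoid_scheme \<Rightarrow> 'a topology \<Rightarrow> bool" where
  "frattini_injective G T \<longleftrightarrow>
     (\<forall>H K. fg_closed_subgroup G T H \<and> fg_closed_subgroup G T K \<and> H \<noteq> K \<longrightarrow>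
        frattini G T H \<noteq> frattini G T K)"

definition abelian_subset :: "('a, 'b) monoid_scheme \<Rightarrow> 'a set \<Rightarrow> bool" where
  "abelian_subset G A \<longleftrightarrow> (\<forall>x\<in>A. \<forall>y\<in>A. x \<otimes>\<^bsub>G\<^esub> y = y \<otimes>\<^bsub>G\<^esub> x)"

definition maximal_abelian_subgroup :: "('a, 'b) monoid_scheme \<Rightarrow> 'a topology \<Rightarrow> 'a set \<Rightarrow> bool" where
  "maximal_abelian_subgroup G T A \<longleftrightarrow> closed_subgroup G T A \<and> abelian_subset G A \<and>
     (\<forall>B. closed_subgroup G T B \<and> abelian_subset G B \<and> A \<subseteq> B \<longrightarrow> B = A)"

definition isolated :: "nat \<Rightarrow> ('a, 'b) monoid_scheme \<Rightarrow> 'a set \<Rightarrow> bool" where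
  "isolated p G H \<longleftrightarrow> (\<forall>x\<in>carrier G. x [^]\<^bsub>G\<^esub> p \<in> H \<longrightarrow> x \<in> H)"

end

theory Submission
  imports Defs
begin

(* Let P = cl<x^p> inside the procyclic group H = cl<x>. The p cosets x^i P (i < p) cover H, and
   if x is not in P the nontrivial ones avoid P, so P is open of prime index and hence a maximal
   open subgroup of H; in every case Phi(H) <= cl<x^p>. Frattini-injectivity now gives two facts.
   First, there is no element z of order p, since then Phi(cl<z>) = 1 = Phi(cl<1>). Second, if
   x^p commutes with a, conjugation by a fixes Phi(cl<x>) pointwise, so cl<x> and cl<x^a> have the
   same Frattini subgroup and coincide; x^a then commutes with x and has the same p-th power, and
   the first fact yields x^a = x. Hence an element whose p-th power lies in a maximal abelian A
   centralizes A, so A and x generate a closed abelian subgroup, which by maximality is A. *)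

section \<open>Centralizers and cyclic cosets\<close>

definition centralizer :: "('a, 'b) monoid_scheme \<Rightarrow> 'a set \<Rightarrow> 'a set" where
  "centralizer G S = {g \<in> carrier G. \<forall>s\<in>S. g \<otimes>\<^bsub>G\<^esub> s = s \<otimes>\<^bsub>G\<^esub> g}"

context group
begin

lemma inv_commute:
  assumes "g \<otimes> s = s \<otimes> g" and "g \<in> carrier G" and "s \<in> carrier G"
  shows "inv g \<otimes> s = s \<otimes> inv g"
proof -
  have "inv g \<otimes> s = inv g \<otimes> (s \<otimes> g) \<otimes> inv g" using assms(2,3) by (simp add: m_assoc)
  also have "\<dots> = inv g \<otimes> (g \<otimes> s) \<otimes> inv g" using assms(1) by simp
  also have "\<dots> = s \<otimes> inv g" using assms(2,3) by (simp add: m_assoc[symmetric])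
  finally show ?thesis .
qed

lemma subgroup_centralizer: "S \<subseteq> carrier G \<Longrightarrow> subgroup (centralizer G S) G"
proof (rule subgroupI)
  fix g h assume S: "S \<subseteq> carrier G" and g: "g \<in> centralizer G S" and h: "h \<in> centralizer G S"
  have "g \<otimes> h \<otimes> s = s \<otimes> (g \<otimes> h)" if "s \<in> S" for s
  proof -
    have gs: "g \<otimes> s = s \<otimes> g" and hs: "h \<otimes> s = s \<otimes> h" and carr: "g \<in> carrier G" "h \<in> carrier G" "s \<in> carrier G"
      using g h S that by (auto simp: centralizer_def)
    have "g \<otimes> h \<otimes> s = g \<otimes> (s \<otimes> h)" using carr by (simp add: m_assoc hs)
    also have "\<dots> = s \<otimes> (g \<otimes> h)" using carr by (simp add: m_assoc[symmetric] gs)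
    finally show ?thesis .
  qed
  then show "g \<otimes> h \<in> centralizer G S"
    using g h by (auto simp: centralizer_def)
  show "inv g \<in> centralizer G S"
    using g S by (auto simp: centralizer_def subset_iff intro: inv_commute)
next
  assume "S \<subseteq> carrier G"
  then have "\<one> \<in> centralizer G S" by (auto simp: centralizer_def)
  then show "centralizer G S \<noteq> {}" by blast
qed (auto simp: centralizer_def)

lemma subset_centralizer_sym:
  "A \<subseteq> carrier G \<Longrightarrow> B \<subseteq> carrier G \<Longrightarrow> A \<subseteq> centralizer G B \<longleftrightarrow> B \<subseteq> centralizer G A"
  by (auto simp: centralizer_def)

lemma abelian_subset_iff_subset_centralizer:
  "S \<subseteq> carrier G \<Longrightarrow> abelian_subset G S \<longleftrightarrow> S \<subseteq> centralizer G S"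
  by (auto simp: abelian_subset_def centralizer_def)

lemma subgroup_set_mult_if_commute:
  assumes H: "subgroup H G" and K: "subgroup K G" and HK: "K \<subseteq> centralizer G H"
  shows "subgroup (H <#> K) G"
proof (rule subgroupI)
  have comm: "k \<otimes> h = h \<otimes> k" if "h \<in> H" "k \<in> K" for h k
    using that HK by (auto simp: centralizer_def)
  show "H <#> K \<subseteq> carrier G" by (simp add: setmult_subset_G H K subgroup.subset)
  show "H <#> K \<noteq> {}" using H K subgroup.one_closed unfolding set_mult_def by blast
  fix g g' assume "g \<in> H <#> K" "g' \<in> H <#> K"
  then obtain h k h' k' where hk: "h \<in> H" "k \<in> K" "g = h \<otimes> k" and hk': "h' \<in> H" "k' \<in> K" "g' = h' \<otimes> k'"
    unfolding set_mult_def by blast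
  have carr: "h \<in> carrier G" "k \<in> carrier G" "h' \<in> carrier G" "k' \<in> carrier G"
    using subgroup.mem_carrier[OF H hk(1)] subgroup.mem_carrier[OF K hk(2)]
      subgroup.mem_carrier[OF H hk'(1)] subgroup.mem_carrier[OF K hk'(2)] .
  have inv_hk: "inv h \<in> H" "inv k \<in> K" using hk H K by (simp_all add: subgroup.m_inv_closed)
  have "inv g = inv k \<otimes> inv h" using hk(3) carr by (simp add: inv_mult_group)
  also have "\<dots> = inv h \<otimes> inv k" using comm[OF inv_hk] .
  finally have "inv g = inv h \<otimes> inv k" .
  then show "inv g \<in> H <#> K" using inv_hk unfolding set_mult_def by blast
  have "g \<otimes> g' = h \<otimes> (k \<otimes> h') \<otimes> k'" using hk hk' carr by (simp add: m_assoc)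
  also have "\<dots> = (h \<otimes> h') \<otimes> (k \<otimes> k')" using carr by (simp add: comm[OF hk'(1) hk(2)] m_assoc)
  finally have "g \<otimes> g' = (h \<otimes> h') \<otimes> (k \<otimes> k')" .
  moreover have "h \<otimes> h' \<in> H" "k \<otimes> k' \<in> K" using hk hk' H K by (simp_all add: subgroup.m_closed)
  ultimately show "g \<otimes> g' \<in> H <#> K" unfolding set_mult_def by blast
qed

lemma mem_subgroup_if_coprime_pows:
  assumes "subgroup K G" and x: "x \<in> carrier G"
    and "x [^] (i::nat) \<in> K" and "x [^] (j::nat) \<in> K" and "coprime i j"
  shows "x \<in> K"
proof -
  obtain u v where uv: "u * int i + v * int j = 1"
    using bezout_int[of "int i" "int j"] \<open>coprime i j\<close> by (auto simp: coprime_int_iff)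
  have "x = x [^] (u * int i + v * int j)" using uv x by simp
  also have "\<dots> = (x [^] int i) [^] u \<otimes> (x [^] int j) [^] v"
    using x by (simp add: int_pow_mult int_pow_pow mult.commute)
  also have "\<dots> \<in> K"
    using assms by (simp add: int_pow_int subgroup.m_closed subgroup_int_pow_closed)
  finally show ?thesis .
qed

lemma mem_subgroup_if_prime_pows:
  assumes "subgroup K G" and "x \<in> carrier G" and p: "Factorial_Ring.prime p"
    and "x [^] p \<in> K" and "x [^] (i::nat) \<in> K" and "0 < i" and "i < p"
  shows "x \<in> K"
proof -
  have "coprime i p"
    using prime_imp_coprime[OF p, of i] \<open>0 < i\<close> \<open>i < p\<close>
    by (simp add: coprime_commute nat_dvd_not_less)
  then show ?thesis using mem_subgroup_if_coprime_pows[OF assms(1,2,5,4)] by simp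
qed

lemma subgroup_pow_mem_if_mult_mem:
  assumes "subgroup K G" and "x \<in> carrier G" and "x [^] (i::nat) \<otimes> q \<in> K" and "q \<in> K"
  shows "x [^] i \<in> K"
proof -
  have "q \<in> carrier G" using subgroup.mem_carrier[OF assms(1,4)] .
  then have "x [^] i = x [^] i \<otimes> q \<otimes> inv q" using assms(2) by (simp add: m_assoc)
  also have "\<dots> \<in> K" using subgroup.m_closed[OF assms(1,3) subgroup.m_inv_closed[OF assms(1,4)]] .
  finally show ?thesis .
qed

lemma generate_set_mult_eq_cosets:
  assumes x: "x \<in> carrier G" and P: "subgroup P G" and "x [^] (n::nat) \<in> P" and "0 < n"
  shows "generate G {x} <#> P = (\<Union>i<n. x [^] i <# P)"
proof
  show "generate G {x} <#> P \<subseteq> (\<Union>i<n. x [^] i <# P)"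
  proof
    fix g assume "g \<in> generate G {x} <#> P"
    then obtain k q where q: "q \<in> P" and g: "g = x [^] (k::int) \<otimes> q"
      using x by (auto simp: generate_pow set_mult_def)
    define i where "i = nat (k mod int n)"
    have i: "i < n" "k = int i + int n * (k div int n)"
      using \<open>0 < n\<close> by (simp_all add: i_def nat_less_iff)
    have "x [^] (int n * (k div int n)) \<in> P"
      using subgroup_int_pow_closed[OF P \<open>x [^] n \<in> P\<close>] int_pow_pow[OF x, of "int n"]
      by (simp add: int_pow_int)
    then have "x [^] (int n * (k div int n)) \<otimes> q \<in> P" using P q by (simp add: subgroup.m_closed)
    moreover have "x [^] k = x [^] i \<otimes> x [^] (int n * (k div int n))"
      using x by (subst i(2)) (simp add: int_pow_mult int_pow_int)
    then have "g = x [^] i \<otimes> (x [^] (int n * (k div int n)) \<otimes> q)"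
      using x q P g by (simp add: m_assoc subgroup.mem_carrier)
    ultimately show "g \<in> (\<Union>i<n. x [^] i <# P)" using i(1) by (auto simp: l_coset_def)
  qed
  have "x [^] i \<in> generate G {x}" for i :: nat
    using x by (auto simp: generate_pow int_pow_int[symmetric])
  then show "(\<Union>i<n. x [^] i <# P) \<subseteq> generate G {x} <#> P"
    by (auto simp: l_coset_def set_mult_def)
qed

lemma conj_eq_if_mem_centralizer:
  assumes a: "a \<in> carrier G" and "g \<in> centralizer G {a}"
  shows "inv a \<otimes> g \<otimes> a = g"
proof -
  have g: "g \<in> carrier G" and comm: "g \<otimes> a = a \<otimes> g" using assms(2) by (auto simp: centralizer_def)
  have "inv a \<otimes> g \<otimes> a = inv a \<otimes> (a \<otimes> g)" using g a by (simp add: m_assoc comm)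
  also have "\<dots> = g" using g a by (simp add: m_assoc[symmetric])
  finally show ?thesis .
qed

lemma eq_if_commute_pow_eq:
  assumes "x \<otimes> y = y \<otimes> x" and x: "x \<in> carrier G" and y: "y \<in> carrier G" and "x [^] (n::nat) = y [^] n"
    and no_torsion: "\<And>z. z \<in> carrier G \<Longrightarrow> z [^] n = \<one> \<Longrightarrow> z = \<one>"
  shows "x = y"
proof -
  have "inv x \<otimes> y = y \<otimes> inv x" using inv_commute[OF assms(1) x y] .
  then have "(inv x \<otimes> y) [^] n = inv (x [^] n) \<otimes> y [^] n"
    using x y pow_mult_distrib[of "inv x" y n] by (simp add: nat_pow_inv)
  also have "\<dots> = \<one>" using x y \<open>x [^] n = y [^] n\<close> by simp
  finally have "inv x \<otimes> y = \<one>" using no_torsion x y by simp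
  then have "y \<otimes> inv x = \<one>" using x y by (simp add: inv_comm)
  then have "inv (inv x) = y" using x y by (intro inv_equality) auto
  then show ?thesis using x by simp
qed

end

section \<open>Closed generation in paratopological groups\<close>

locale paratopological_group = group G for G (structure) and T +
  assumes topspace_eq: "topspace T = carrier G"
    and continuous_mult: "continuous_map (prod_topology T T) T (\<lambda>(x, y). x \<otimes> y)"
begin

lemma continuous_map_mult_left: "c \<in> carrier G \<Longrightarrow> continuous_map T T (\<lambda>g. c \<otimes> g)"
  using continuous_map_compose[OF continuous_map_pairedI[OF continuous_map_const[THEN iffD2] continuous_map_id]
      continuous_mult]
  by (simp add: o_def topspace_eq)

lemma continuous_map_mult_right: "c \<in> carrier G \<Longrightarrow> continuous_map T T (\<lambda>g. g \<otimes> c)"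
  using continuous_map_compose[OF continuous_map_pairedI[OF continuous_map_id continuous_map_const[THEN iffD2]]
      continuous_mult]
  by (simp add: o_def topspace_eq)

lemma closed_subgroup_carrier: "closed_subgroup G T (carrier G)"
  by (metis closed_subgroup_def closedin_topspace subgroup_self topspace_eq)

lemma closed_subgroup_subset: "closed_subgroup G T H \<Longrightarrow> H \<subseteq> carrier G"
  by (simp add: closed_subgroup_def subgroup.subset)

lemma closed_subgroup_closed_generate: "closed_subgroup G T (closed_generate G T S)"
proof (cases "{H. closed_subgroup G T H \<and> S \<subseteq> H} = {}")
  case True
  then show ?thesis unfolding closed_generate_def True by (simp add: closed_subgroup_carrier)
next
  case False
  then have "closed_generate G T S = \<Inter>{H. closed_subgroup G T H \<and> S \<subseteq> H}"
    using closed_subgroup_subset by (auto simp: closed_generate_def)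
  moreover have "subgroup (\<Inter>{H. closed_subgroup G T H \<and> S \<subseteq> H}) G"
    using False by (intro subgroups_Inter) (auto simp: closed_subgroup_def)
  moreover have "closedin T (\<Inter>{H. closed_subgroup G T H \<and> S \<subseteq> H})"
    using False by (intro closedin_Inter) (auto simp: closed_subgroup_def)
  ultimately show ?thesis by (simp add: closed_subgroup_def)
qed

lemma closed_generate_min: "closed_subgroup G T H \<Longrightarrow> S \<subseteq> H \<Longrightarrow> closed_generate G T S \<subseteq> H"
  by (auto simp: closed_generate_def)

lemma closed_generate_incl: "S \<subseteq> carrier G \<Longrightarrow> S \<subseteq> closed_generate G T S"
  by (auto simp: closed_generate_def)

lemma fg_closed_subgroup_closed_generate:
  "finite S \<Longrightarrow> S \<subseteq> carrier G \<Longrightarrow> fg_closed_subgroup G T (closed_generate G T S)"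
  unfolding fg_closed_subgroup_def using closed_subgroup_closed_generate closed_generate_incl by blast

lemma closed_generate_eq_if_frattini_eq:
  assumes "frattini_injective G T" and "finite S" "S \<subseteq> carrier G" and "finite S'" "S' \<subseteq> carrier G"
    and "frattini G T (closed_generate G T S) = frattini G T (closed_generate G T S')"
  shows "closed_generate G T S = closed_generate G T S'"
  using assms fg_closed_subgroup_closed_generate unfolding frattini_injective_def by blast

lemma homeomorphic_maps_mult_left:
  "c \<in> carrier G \<Longrightarrow> homeomorphic_maps T T (\<lambda>g. c \<otimes> g) (\<lambda>g. inv c \<otimes> g)"
  by (simp add: homeomorphic_maps_def continuous_map_mult_left topspace_eq m_assoc[symmetric])

lemma closedin_l_coset:
  assumes "c \<in> carrier G" and "closedin T P" shows "closedin T (c <# P)"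
proof -
  have "homeomorphic_map T T (\<lambda>g. c \<otimes> g)"
    using homeomorphic_maps_mult_left[OF assms(1)] homeomorphic_maps_map by blast
  moreover have "c <# P = (\<lambda>g. c \<otimes> g) ` P" by (auto simp: l_coset_def)
  ultimately show ?thesis using homeomorphic_map_closedness closedin_subset[OF assms(2)] assms(2) by metis
qed

end

section \<open>Topological automorphisms and Frattini subgroups\<close>

lemma frattini_subset: "frattini G T H \<subseteq> H"
  by (auto simp: frattini_def)

lemma frattini_subset_maximal: "maximal_open_subgroup_of G T H M \<Longrightarrow> frattini G T H \<subseteq> M"
  by (auto simp: frattini_def)

lemma one_mem_frattini: "subgroup H G \<Longrightarrow> \<one>\<^bsub>G\<^esub> \<in> frattini G T H"
  by (auto simp: frattini_def maximal_open_subgroup_of_def open_subgroup_of_def subgroup.one_closed)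

locale topological_automorphism = paratopological_group G T for G (structure) and T +
  fixes \<phi> \<psi>
  assumes hom: "\<phi> \<in> hom G G"
    and homeomorphic_maps: "homeomorphic_maps T T \<phi> \<psi>"
begin

lemma inverse_eq: "g \<in> carrier G \<Longrightarrow> \<psi> (\<phi> g) = g" "g \<in> carrier G \<Longrightarrow> \<phi> (\<psi> g) = g"
  using homeomorphic_maps by (auto simp: homeomorphic_maps_def topspace_eq)

lemma image_image_inverse:
  assumes "U \<subseteq> carrier G" shows "\<psi> ` \<phi> ` U = U" "\<phi> ` \<psi> ` U = U"
  using assms by (simp_all add: image_image subset_iff inverse_eq cong: image_cong)

lemma inverse: "topological_automorphism G T \<psi> \<phi>"
proof unfold_locales
  have "continuous_map T T \<psi>" using homeomorphic_maps by (simp add: homeomorphic_maps_def)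
  then have \<psi>_carrier: "\<psi> ` carrier G \<subseteq> carrier G"
    using continuous_map_image_subset_topspace topspace_eq by metis
  show "\<psi> \<in> hom G G"
  proof (rule homI)
    fix x y assume "x \<in> carrier G" "y \<in> carrier G"
    moreover have "\<psi> x \<in> carrier G" "\<psi> y \<in> carrier G"
      using \<open>x \<in> carrier G\<close> \<open>y \<in> carrier G\<close> \<psi>_carrier by auto
    ultimately have "\<psi> (x \<otimes> y) = \<psi> (\<phi> (\<psi> x \<otimes> \<psi> y))"
      using hom_mult[OF hom] by (simp add: inverse_eq)
    also have "\<dots> = \<psi> x \<otimes> \<psi> y"
      using \<open>\<psi> x \<in> carrier G\<close> \<open>\<psi> y \<in> carrier G\<close> by (simp add: inverse_eq)
    finally show "\<psi> (x \<otimes> y) = \<psi> x \<otimes> \<psi> y" .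
  qed (use \<psi>_carrier in auto)
  show "homeomorphic_maps T T \<psi> \<phi>" using homeomorphic_maps homeomorphic_maps_sym by blast
qed

lemma image_subset_carrier: "U \<subseteq> carrier G \<Longrightarrow> \<phi> ` U \<subseteq> carrier G"
  using hom by (auto simp: hom_def)

lemma homeomorphic_map: "homeomorphic_map T T \<phi>"
  using homeomorphic_maps homeomorphic_maps_map by blast

lemma image_subgroup: "subgroup H G \<Longrightarrow> subgroup (\<phi> ` H) G"
  using hom by (intro group_hom.subgroup_img_is_subgroup) (auto simp: group_hom_def group_hom_axioms_def)

lemma image_closed_subgroup:
  assumes "closed_subgroup G T H" shows "closed_subgroup G T (\<phi> ` H)"
proof -
  have "closedin T H" and "subgroup H G" using assms by (auto simp: closed_subgroup_def)
  then show ?thesis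
    using homeomorphic_map_closedness[OF homeomorphic_map closedin_subset[OF \<open>closedin T H\<close>]]
    by (simp add: closed_subgroup_def image_subgroup)
qed

lemma image_open_subgroup_of:
  assumes "H \<subseteq> carrier G" and "open_subgroup_of G T H M"
  shows "open_subgroup_of G T (\<phi> ` H) (\<phi> ` M)"
proof -
  have hm: "homeomorphic_map (subtopology T H) (subtopology T (\<phi> ` H)) \<phi>"
    using assms(1) image_subset_carrier[OF assms(1)]
    by (intro homeomorphic_map_subtopologies homeomorphic_map) (auto simp: topspace_eq Int_absorb1)
  have "M \<subseteq> topspace (subtopology T H)"
    using assms by (auto simp: open_subgroup_of_def topspace_eq)
  from homeomorphic_map_openness[OF hm this]
  have "openin (subtopology T (\<phi> ` H)) (\<phi> ` M)"
    using assms(2) by (simp add: open_subgroup_of_def)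
  then show ?thesis using assms(2) by (auto simp: open_subgroup_of_def image_subgroup)
qed

lemma image_maximal_open_subgroup_of:
  assumes H: "H \<subseteq> carrier G" and M: "maximal_open_subgroup_of G T H M"
  shows "maximal_open_subgroup_of G T (\<phi> ` H) (\<phi> ` M)"
proof -
  interpret inv: topological_automorphism G T \<psi> \<phi> by (rule inverse)
  have M_open: "open_subgroup_of G T H M" and "M \<noteq> H"
    and M_max: "\<And>M'. open_subgroup_of G T H M' \<Longrightarrow> M \<subseteq> M' \<Longrightarrow> M' = M \<or> M' = H"
    using M by (auto simp: maximal_open_subgroup_of_def)
  then have "M \<subseteq> H" by (simp add: open_subgroup_of_def)
  show ?thesis unfolding maximal_open_subgroup_of_def
  proof (intro conjI allI impI)
    show "open_subgroup_of G T (\<phi> ` H) (\<phi> ` M)" using image_open_subgroup_of[OF H M_open] .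
    show "\<phi> ` M \<noteq> \<phi> ` H"
      using \<open>M \<noteq> H\<close> \<open>M \<subseteq> H\<close> H image_image_inverse(1) by (metis order_trans)
    fix M' assume M': "open_subgroup_of G T (\<phi> ` H) M' \<and> \<phi> ` M \<subseteq> M'"
    have M'_carrier: "M' \<subseteq> carrier G"
      using M' image_subset_carrier[OF H] by (auto simp: open_subgroup_of_def)
    have "open_subgroup_of G T H (\<psi> ` M')"
      using inv.image_open_subgroup_of[of "\<phi> ` H" M'] M' image_subset_carrier[OF H]
      by (simp add: image_image_inverse(1)[OF H])
    moreover have "M \<subseteq> \<psi> ` M'"
      using M' image_image_inverse(1) \<open>M \<subseteq> H\<close> H by (metis image_mono order_trans)
    ultimately have "\<psi> ` M' = M \<or> \<psi> ` M' = H" by (rule M_max)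
    then show "M' = \<phi> ` M \<or> M' = \<phi> ` H" using image_image_inverse(2)[OF M'_carrier] by auto
  qed
qed

lemma image_frattini_subset:
  assumes H: "H \<subseteq> carrier G" shows "\<phi> ` frattini G T H \<subseteq> frattini G T (\<phi> ` H)"
proof
  interpret inv: topological_automorphism G T \<psi> \<phi> by (rule inverse)
  fix g assume "g \<in> \<phi> ` frattini G T H"
  then obtain h where h: "h \<in> frattini G T H" and g: "g = \<phi> h" by auto
  have "g \<in> M" if M: "maximal_open_subgroup_of G T (\<phi> ` H) M" for M
  proof -
    have "M \<subseteq> \<phi> ` H" using M by (simp add: maximal_open_subgroup_of_def open_subgroup_of_def)
    then have "M \<subseteq> carrier G" using image_subset_carrier[OF H] by (rule order_trans)
    have "maximal_open_subgroup_of G T H (\<psi> ` M)"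
      using inv.image_maximal_open_subgroup_of[OF image_subset_carrier[OF H] M]
      by (simp add: image_image_inverse(1)[OF H])
    then have "h \<in> \<psi> ` M" using h by (auto dest: frattini_subset_maximal)
    then have "\<phi> h \<in> \<phi> ` \<psi> ` M" by (rule imageI)
    then show ?thesis using g image_image_inverse(2)[OF \<open>M \<subseteq> carrier G\<close>] by simp
  qed
  moreover have "g \<in> \<phi> ` H" using h g frattini_subset[of G T H] by blast
  ultimately show "g \<in> frattini G T (\<phi> ` H)" by (simp add: frattini_def)
qed

lemma image_frattini:
  assumes H: "H \<subseteq> carrier G" shows "frattini G T (\<phi> ` H) = \<phi> ` frattini G T H"
proof
  interpret inv: topological_automorphism G T \<psi> \<phi> by (rule inverse)
  have "frattini G T (\<phi> ` H) \<subseteq> carrier G"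
    using frattini_subset[of G T "\<phi> ` H"] image_subset_carrier[OF H] by (rule order_trans)
  then have "frattini G T (\<phi> ` H) = \<phi> ` \<psi> ` frattini G T (\<phi> ` H)"
    by (simp add: image_image_inverse(2))
  also have "\<dots> \<subseteq> \<phi> ` frattini G T H"
    using inv.image_frattini_subset[OF image_subset_carrier[OF H]]
    by (simp add: image_image_inverse(1)[OF H] image_mono)
  finally show "frattini G T (\<phi> ` H) \<subseteq> \<phi> ` frattini G T H" .
  show "\<phi> ` frattini G T H \<subseteq> frattini G T (\<phi> ` H)" using image_frattini_subset[OF H] .
qed

lemma image_closed_generate:
  assumes S: "S \<subseteq> carrier G" shows "\<phi> ` closed_generate G T S = closed_generate G T (\<phi> ` S)"
proof
  interpret inv: topological_automorphism G T \<psi> \<phi> by (rule inverse)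
  let ?C = "closed_generate G T (\<phi> ` S)"
  have "?C \<subseteq> carrier G" using closed_subgroup_closed_generate closed_subgroup_subset by blast
  have "S \<subseteq> \<psi> ` ?C"
    using image_mono[OF closed_generate_incl[OF image_subset_carrier[OF S]], of \<psi>]
    by (simp add: image_image_inverse(1)[OF S])
  then have "closed_generate G T S \<subseteq> \<psi> ` ?C"
    by (intro closed_generate_min inv.image_closed_subgroup closed_subgroup_closed_generate)
  then have "\<phi> ` closed_generate G T S \<subseteq> \<phi> ` \<psi> ` ?C" by (rule image_mono)
  then show "\<phi> ` closed_generate G T S \<subseteq> ?C" by (simp add: image_image_inverse(2)[OF \<open>?C \<subseteq> carrier G\<close>])
  show "?C \<subseteq> \<phi> ` closed_generate G T S"
    using closed_generate_incl[OF S]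
    by (intro closed_generate_min image_closed_subgroup closed_subgroup_closed_generate image_mono)
qed

end

lemma (in paratopological_group) topological_automorphism_conj:
  assumes a: "a \<in> carrier G"
  shows "topological_automorphism G T (\<lambda>g. inv a \<otimes> g \<otimes> a) (\<lambda>g. a \<otimes> g \<otimes> inv a)"
proof (intro topological_automorphism.intro topological_automorphism_axioms.intro paratopological_group_axioms)
  show "(\<lambda>g. inv a \<otimes> g \<otimes> a) \<in> hom G G"
  proof (rule homI)
    fix x y assume "x \<in> carrier G" "y \<in> carrier G"
    have cancel: "w \<otimes> a \<otimes> inv a = w" if "w \<in> carrier G" for w using a that by (simp add: m_assoc)
    show "inv a \<otimes> (x \<otimes> y) \<otimes> a = inv a \<otimes> x \<otimes> a \<otimes> (inv a \<otimes> y \<otimes> a)"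
      using a \<open>x \<in> carrier G\<close> \<open>y \<in> carrier G\<close> by (simp add: m_assoc[symmetric] cancel)
  qed (use a in simp)
  have "continuous_map T T (\<lambda>g. c \<otimes> g \<otimes> d)" if "c \<in> carrier G" "d \<in> carrier G" for c d
    using continuous_map_compose[OF continuous_map_mult_left continuous_map_mult_right] that
    by (simp add: o_def)
  then show "homeomorphic_maps T T (\<lambda>g. inv a \<otimes> g \<otimes> a) (\<lambda>g. a \<otimes> g \<otimes> inv a)"
    using a by (simp add: homeomorphic_maps_def topspace_eq m_assoc) (simp add: m_assoc[symmetric])
qed

section \<open>Procyclic subgroups and Frattini-injectivity\<close>

locale hausdorff_paratopological_group = paratopological_group +
  assumes hausdorff: "Hausdorff_space T"
begin

lemma closedin_centralizer:
  assumes "S \<subseteq> carrier G" shows "closedin T (centralizer G S)"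
proof -
  have closed_commuting: "closedin T {g \<in> topspace T. g \<otimes> s = s \<otimes> g}" if "s \<in> carrier G" for s
  proof -
    have "continuous_map T (prod_topology T T) (\<lambda>g. (g \<otimes> s, s \<otimes> g))"
      using that by (intro continuous_map_pairedI continuous_map_mult_left continuous_map_mult_right)
    from closedin_continuous_map_preimage[OF this hausdorff[unfolded Hausdorff_space_closedin_diagonal]]
    have "closedin T {g \<in> topspace T. (g \<otimes> s, s \<otimes> g) \<in> (\<lambda>x. (x, x)) ` topspace T}" .
    moreover have "{g \<in> topspace T. (g \<otimes> s, s \<otimes> g) \<in> (\<lambda>x. (x, x)) ` topspace T}
        = {g \<in> topspace T. g \<otimes> s = s \<otimes> g}"
      using that by (auto simp: topspace_eq)
    ultimately show ?thesis by simp
  qed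
  have "centralizer G S = topspace T \<inter> (\<Inter>s\<in>S. {g \<in> topspace T. g \<otimes> s = s \<otimes> g})"
    by (auto simp: centralizer_def topspace_eq)
  also have "closedin T \<dots>"
  proof (cases "S = {}")
    case False
    then show ?thesis
      using assms closed_commuting by (intro closedin_Int closedin_topspace closedin_Inter) auto
  qed simp
  finally show ?thesis .
qed

lemma closed_subgroup_centralizer: "S \<subseteq> carrier G \<Longrightarrow> closed_subgroup G T (centralizer G S)"
  by (simp add: closed_subgroup_def closedin_centralizer subgroup_centralizer)

lemma closed_generate_one: "closed_generate G T {\<one>} = {\<one>}"
proof -
  have "closed_subgroup G T {\<one>}"
    using closedin_t1_singleton[OF Hausdorff_imp_t1_space[OF hausdorff]]
    by (simp add: closed_subgroup_def topspace_eq triv_subgroup)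
  then have "closed_generate G T {\<one>} \<subseteq> {\<one>}" by (rule closed_generate_min) simp
  moreover have "{\<one>} \<subseteq> closed_generate G T {\<one>}" by (rule closed_generate_incl) simp
  ultimately show ?thesis by (rule antisym)
qed

lemma abelian_subset_closed_generate:
  assumes S: "S \<subseteq> carrier G" and "abelian_subset G S"
  shows "abelian_subset G (closed_generate G T S)"
proof -
  let ?C = "closed_generate G T S"
  have C: "?C \<subseteq> carrier G" using closed_subgroup_subset[OF closed_subgroup_closed_generate] .
  have "S \<subseteq> centralizer G S" using assms abelian_subset_iff_subset_centralizer by simp
  then have "?C \<subseteq> centralizer G S" by (rule closed_generate_min[OF closed_subgroup_centralizer[OF S]])
  then have "S \<subseteq> centralizer G ?C" using subset_centralizer_sym S C by simp
  then have "?C \<subseteq> centralizer G ?C" by (rule closed_generate_min[OF closed_subgroup_centralizer[OF C]])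
  then show ?thesis using abelian_subset_iff_subset_centralizer C by simp
qed

lemma closed_generate_singleton_subset_cosets:
  assumes x: "x \<in> carrier G" and "0 < (n::nat)"
  shows "closed_generate G T {x} \<subseteq> (\<Union>i<n. x [^] i <# closed_generate G T {x [^] n})"
proof -
  \<comment> \<open>The union is the product of the commuting subgroups generated by x and by x^n,
    and it is closed as a finite union of closed cosets.\<close>
  let ?P = "closed_generate G T {x [^] n}"
  have P: "subgroup ?P G" "closedin T ?P"
    using closed_subgroup_closed_generate by (auto simp: closed_subgroup_def)
  have "x [^] n \<in> ?P" using closed_generate_incl[of "{x [^] n}"] x by simp
  have "x [^] n \<in> centralizer G {x}" using x group_commutes_pow[of x x n] by (simp add: centralizer_def)
  then have "?P \<subseteq> centralizer G {x}" using x by (intro closed_generate_min closed_subgroup_centralizer) auto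
  then have "{x} \<subseteq> centralizer G ?P"
    using subset_centralizer_sym[of ?P "{x}"] subgroup.subset[OF P(1)] x by simp
  then have "generate G {x} \<subseteq> centralizer G ?P"
    using generate_subgroup_incl subgroup_centralizer[OF subgroup.subset[OF P(1)]] by blast
  moreover have gen: "subgroup (generate G {x}) G" using x by (simp add: generate_is_subgroup)
  ultimately have "?P \<subseteq> centralizer G (generate G {x})"
    using subset_centralizer_sym[of "generate G {x}" ?P] subgroup.subset[OF P(1)] subgroup.subset[OF gen]
    by simp
  from subgroup_set_mult_if_commute[OF gen P(1) this]
  have "subgroup (\<Union>i<n. x [^] i <# ?P) G"
    by (simp add: generate_set_mult_eq_cosets[OF x P(1) \<open>x [^] n \<in> ?P\<close> \<open>0 < n\<close>])
  moreover have "closedin T (\<Union>i<n. x [^] i <# ?P)"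
    using x P(2) by (intro closedin_Union) (auto intro: closedin_l_coset)
  moreover have "x \<in> (\<Union>i<n. x [^] i <# ?P)"
  proof -
    have "x \<otimes> \<one> \<in> generate G {x} <#> ?P"
      using P(1) subgroup.one_closed generate.incl[of x "{x}" G] unfolding set_mult_def by blast
    then show ?thesis using x generate_set_mult_eq_cosets[OF x P(1) \<open>x [^] n \<in> ?P\<close> \<open>0 < n\<close>] by simp
  qed
  ultimately show ?thesis by (intro closed_generate_min) (auto simp: closed_subgroup_def)
qed

lemma closed_generate_singleton_diff_pow:
  assumes x: "x \<in> carrier G" and "0 < (n::nat)"
    and "g \<in> closed_generate G T {x}" and "g \<notin> closed_generate G T {x [^] n}"
  obtains i q where "0 < i" "i < n" "q \<in> closed_generate G T {x [^] n}" "g = x [^] i \<otimes> q"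
proof -
  let ?P = "closed_generate G T {x [^] n}"
  obtain i where "i < n" and g: "g \<in> x [^] i <# ?P"
    using closed_generate_singleton_subset_cosets[OF x \<open>0 < n\<close>] assms(3) by blast
  moreover have "i \<noteq> 0"
  proof
    assume "i = 0"
    have "?P \<subseteq> carrier G" using closed_subgroup_closed_generate closed_subgroup_subset by blast
    then have "g \<in> ?P" using g \<open>i = 0\<close> by (simp add: lcos_mult_one)
    then show False using assms(4) by contradiction
  qed
  ultimately show ?thesis using that by (auto simp: l_coset_def)
qed

lemma closed_generate_pow_subset:
  "x \<in> carrier G \<Longrightarrow> closed_generate G T {x [^] (n::nat)} \<subseteq> closed_generate G T {x}"
  using closed_generate_incl[of "{x}"] subgroup_int_pow_closed[of "closed_generate G T {x}" x "int n"]
    closed_subgroup_closed_generate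
  by (intro closed_generate_min) (auto simp: closed_subgroup_def int_pow_int)

lemma openin_closed_generate_pow:
  assumes x: "x \<in> carrier G" and p: "Factorial_Ring.prime (p::nat)"
    and x_notin: "x \<notin> closed_generate G T {x [^] p}"
  shows "openin (subtopology T (closed_generate G T {x})) (closed_generate G T {x [^] p})"
proof -
  define H P where "H = closed_generate G T {x}" and "P = closed_generate G T {x [^] p}"
  have P: "subgroup P G" "closedin T P"
    using closed_subgroup_closed_generate by (auto simp: P_def closed_subgroup_def)
  have "0 < p" using p prime_gt_0_nat by blast
  have "x [^] p \<in> P" using closed_generate_incl[of "{x [^] p}"] x by (simp add: P_def)
  define Q where "Q = (\<Union>i\<in>{0<..<p}. x [^] i <# P)"
  have "P \<inter> Q = {}"
  proof -
    have "x [^] i \<otimes> q \<notin> P" if "0 < i" "i < p" "q \<in> P" for i q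
      using mem_subgroup_if_prime_pows[OF P(1) x p \<open>x [^] p \<in> P\<close> _ that(1,2)]
        subgroup_pow_mem_if_mult_mem[OF P(1) x _ that(3)] x_notin by (auto simp: P_def)
    then show ?thesis by (auto simp: Q_def l_coset_def)
  qed
  moreover have "H - Q \<subseteq> P"
  proof
    fix g assume g: "g \<in> H - Q"
    show "g \<in> P"
    proof (rule ccontr)
      assume "g \<notin> P"
      then obtain i q where "0 < i" "i < p" "q \<in> P" "g = x [^] i \<otimes> q"
        using closed_generate_singleton_diff_pow[OF x \<open>0 < p\<close>] g unfolding H_def P_def by blast
      then have "g \<in> Q" by (auto simp: Q_def l_coset_def)
      with g show False by blast
    qed
  qed
  moreover have "P \<subseteq> H" "H \<subseteq> topspace T"
    using closed_generate_pow_subset[OF x] closed_subgroup_subset[OF closed_subgroup_closed_generate]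
    by (auto simp: H_def P_def topspace_eq)
  ultimately have "P = H \<inter> (topspace T - Q)" by blast
  moreover have "closedin T Q"
    unfolding Q_def using x P(2) by (intro closedin_Union) (auto intro: closedin_l_coset)
  ultimately show ?thesis
    unfolding H_def P_def by (metis openin_subtopology_Int2 openin_diff openin_topspace)
qed

lemma maximal_open_subgroup_closed_generate_pow:
  assumes x: "x \<in> carrier G" and p: "Factorial_Ring.prime (p::nat)"
    and x_notin: "x \<notin> closed_generate G T {x [^] p}"
  shows "maximal_open_subgroup_of G T (closed_generate G T {x}) (closed_generate G T {x [^] p})"
proof -
  define H P where "H = closed_generate G T {x}" and "P = closed_generate G T {x [^] p}"
  have "0 < p" using p prime_gt_0_nat by blast
  have "x \<in> H" and "x [^] p \<in> P"
    using closed_generate_incl[of "{x}"] closed_generate_incl[of "{x [^] p}"] x by (auto simp: H_def P_def)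
  have "M = H" if M_open: "open_subgroup_of G T H M" and PM: "P \<subseteq> M" and "M \<noteq> P" for M
  proof -
    have M: "subgroup M G" "M \<subseteq> H" using M_open by (auto simp: open_subgroup_of_def)
    obtain m where "m \<in> M" "m \<notin> P" using PM \<open>M \<noteq> P\<close> by blast
    then obtain i q where i: "0 < i" "i < p" and "q \<in> P" "m = x [^] i \<otimes> q"
      using closed_generate_singleton_diff_pow[OF x \<open>0 < p\<close>] M(2) by (metis P_def H_def subsetD)
    then have "x [^] i \<in> M" using subgroup_pow_mem_if_mult_mem[OF M(1) x] \<open>m \<in> M\<close> PM by blast
    then have "x \<in> M" using mem_subgroup_if_prime_pows[OF M(1) x p _ _ i] \<open>x [^] p \<in> P\<close> PM by blast
    then have "x [^] i \<otimes> q \<in> M" if "q \<in> P" for i :: nat and q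
      using that M(1) PM subgroup_int_pow_closed[OF M(1), of x "int i"]
      by (simp add: int_pow_int subgroup.m_closed subsetD)
    then have "H \<subseteq> M"
      using closed_generate_singleton_subset_cosets[OF x \<open>0 < p\<close>] by (auto simp: H_def P_def l_coset_def)
    then show ?thesis using M(2) by blast
  qed
  then show ?thesis
    using openin_closed_generate_pow[OF assms] closed_subgroup_closed_generate closed_generate_pow_subset[OF x]
      \<open>x \<in> H\<close> x_notin
    by (auto simp: maximal_open_subgroup_of_def open_subgroup_of_def closed_subgroup_def H_def P_def)
qed

lemma frattini_closed_generate_singleton_subset:
  assumes "x \<in> carrier G" and "Factorial_Ring.prime (p::nat)"
  shows "frattini G T (closed_generate G T {x}) \<subseteq> closed_generate G T {x [^] p}"
proof (cases "x \<in> closed_generate G T {x [^] p}")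
  case True
  then have "closed_generate G T {x} \<subseteq> closed_generate G T {x [^] p}"
    by (intro closed_generate_min closed_subgroup_closed_generate) simp
  with frattini_subset show ?thesis by (rule order_trans)
next
  case False
  then show ?thesis
    using frattini_subset_maximal[OF maximal_open_subgroup_closed_generate_pow[OF assms]] by simp
qed

lemma eq_one_if_pow_prime_eq_one:
  assumes FI: "frattini_injective G T" and p: "Factorial_Ring.prime (p::nat)"
    and z: "z \<in> carrier G" and "z [^] p = \<one>"
  shows "z = \<one>"
proof -
  have Z: "subgroup (closed_generate G T {z}) G"
    using closed_subgroup_closed_generate by (simp add: closed_subgroup_def)
  have "frattini G T (closed_generate G T {z}) \<subseteq> {\<one>}"
    using frattini_closed_generate_singleton_subset[OF z p] by (simp add: \<open>z [^] p = \<one>\<close> closed_generate_one)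
  then have "frattini G T (closed_generate G T {z}) = {\<one>}" using one_mem_frattini[OF Z] by auto
  also have "\<dots> = frattini G T (closed_generate G T {\<one>})"
    using frattini_subset[of G T "{\<one>}"] one_mem_frattini[OF triv_subgroup, of T]
    by (auto simp: closed_generate_one)
  finally have "frattini G T (closed_generate G T {z}) = frattini G T (closed_generate G T {\<one>})" .
  then have "closed_generate G T {z} = closed_generate G T {\<one>}"
    using closed_generate_eq_if_frattini_eq[OF FI] z by simp
  then show ?thesis using closed_generate_incl[of "{z}"] z closed_generate_one by simp
qed

lemma closed_generate_conj_eq_if_pow_commute:
  assumes FI: "frattini_injective G T" and p: "Factorial_Ring.prime (p::nat)"
    and x: "x \<in> carrier G" and a: "a \<in> carrier G" and "x [^] p \<in> centralizer G {a}"
  shows "closed_generate G T {inv a \<otimes> x \<otimes> a} = closed_generate G T {x}"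
proof -
  let ?c = "\<lambda>g. inv a \<otimes> g \<otimes> a"
  interpret conj: topological_automorphism G T ?c "\<lambda>g. a \<otimes> g \<otimes> inv a"
    using topological_automorphism_conj[OF a] .
  have "closed_generate G T {x [^] p} \<subseteq> centralizer G {a}"
    using a assms(5) by (intro closed_generate_min closed_subgroup_centralizer) auto
  then have "frattini G T (closed_generate G T {x}) \<subseteq> centralizer G {a}"
    using frattini_closed_generate_singleton_subset[OF x p] by (rule order_trans[rotated])
  then have "?c ` frattini G T (closed_generate G T {x}) = frattini G T (closed_generate G T {x})"
    using conj_eq_if_mem_centralizer[OF a] by (auto simp: image_iff subset_iff)
  moreover have "closed_generate G T {?c x} = ?c ` closed_generate G T {x}"
    using conj.image_closed_generate[of "{x}"] x by simp
  ultimately have "frattini G T (closed_generate G T {?c x}) = frattini G T (closed_generate G T {x})"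
    using conj.image_frattini[OF closed_subgroup_subset[OF closed_subgroup_closed_generate]] by simp
  then show ?thesis using closed_generate_eq_if_frattini_eq[OF FI] x a by simp
qed

lemma commute_if_pow_commute:
  assumes FI: "frattini_injective G T" and p: "Factorial_Ring.prime (p::nat)"
    and x: "x \<in> carrier G" and a: "a \<in> carrier G" and "x [^] p \<otimes> a = a \<otimes> x [^] p"
  shows "x \<otimes> a = a \<otimes> x"
proof -
  let ?y = "inv a \<otimes> x \<otimes> a"
  have y: "?y \<in> carrier G" using x a by simp
  have xp: "x [^] p \<in> centralizer G {a}" using assms(5) x a by (simp add: centralizer_def)
  have "closed_generate G T {x} \<subseteq> centralizer G {x}"
    using x by (intro closed_generate_min closed_subgroup_centralizer) (auto simp: centralizer_def)
  then have comm: "x \<otimes> ?y = ?y \<otimes> x"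
    using closed_generate_conj_eq_if_pow_commute[OF FI p x a xp] closed_generate_incl[of "{?y}"] y
    by (auto simp: centralizer_def)
  have "?y [^] p = inv a \<otimes> x [^] p \<otimes> a"
    using hom_nat_pow[OF topological_automorphism.hom[OF topological_automorphism_conj[OF a]] x is_group is_group]
    by simp
  then have "x [^] p = ?y [^] p" using conj_eq_if_mem_centralizer[OF a xp] by simp
  from eq_if_commute_pow_eq[OF comm x y this eq_one_if_pow_prime_eq_one[OF FI p]]
  have "a \<otimes> x = a \<otimes> (inv a \<otimes> x \<otimes> a)" by simp
  then show ?thesis using x a by (simp add: m_assoc[symmetric])
qed

lemma isolated_if_maximal_abelian_subgroup:
  assumes FI: "frattini_injective G T" and p: "Factorial_Ring.prime p"
    and A: "maximal_abelian_subgroup G T A"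
  shows "isolated p G A"
  unfolding isolated_def
proof (intro ballI impI)
  fix x assume x: "x \<in> carrier G" and "x [^] p \<in> A"
  have A_closed: "closed_subgroup G T A" and "abelian_subset G A"
    and A_max: "\<And>B. closed_subgroup G T B \<Longrightarrow> abelian_subset G B \<Longrightarrow> A \<subseteq> B \<Longrightarrow> B = A"
    using A by (auto simp: maximal_abelian_subgroup_def)
  have A_carrier: "A \<subseteq> carrier G" using closed_subgroup_subset[OF A_closed] .
  have "x \<otimes> a = a \<otimes> x" if "a \<in> A" for a
    using commute_if_pow_commute[OF FI p x] that A_carrier \<open>x [^] p \<in> A\<close> \<open>abelian_subset G A\<close>
    by (auto simp: abelian_subset_def)
  then have "abelian_subset G (insert x A)"
    using \<open>abelian_subset G A\<close> by (auto simp: abelian_subset_def)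
  then have "abelian_subset G (closed_generate G T (insert x A))"
    using x A_carrier by (intro abelian_subset_closed_generate) auto
  moreover have "insert x A \<subseteq> closed_generate G T (insert x A)"
    using x A_carrier by (intro closed_generate_incl) auto
  ultimately have "closed_generate G T (insert x A) = A"
    using A_max closed_subgroup_closed_generate by blast
  then show "x \<in> A" using \<open>insert x A \<subseteq> closed_generate G T (insert x A)\<close> by blast
qed

end

theorem mainTheorem12:
  fixes p :: nat and G :: "('a, 'b) monoid_scheme" and T :: "'a topology" and A :: "'a set"
  assumes "pro_p_group p G T"
    and "frattini_injective G T"
    and "maximal_abelian_subgroup G T A"
  shows "isolated p G A"
proof -
  have "hausdorff_paratopological_group G T" and "Factorial_Ring.prime p"
    using assms(1)
    by (auto simp: pro_p_group_def topological_group_def hausdorff_paratopological_group_def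
        hausdorff_paratopological_group_axioms_def paratopological_group_def paratopological_group_axioms_def)
  then show ?thesis
    using hausdorff_paratopological_group.isolated_if_maximal_abelian_subgroup assms(2,3) by blast
qed

end
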